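(* Let $q\ge5$, $\mu\in\mathbb{F}_q\setminus\{0,1\}$, and let $\ell_\mu$ be the line through $\mathbf{P}(0,\mu,0,1)$ and $\mathbf{P}(1,0,1,0)$. Then $\ell_\mu$ is an $\mathcal{E}_{nG}$-line in each of the following cases: (i) $q$ is even; (ii) $q\equiv0\pmod3$; (iii) $q\not\equiv0\pmod3$, $q$ is odd and $\mu\ne1/9$.
   Context: Points of $\mathrm{PG}(3,q)$ are written $\mathbf{P}(x_0,x_1,x_2,x_3)$ over $\mathbb{F}_q$. For $t$ in $\mathbb{F}_q$ or $\mathbb{F}_{q^2}$ put $P(t)=\mathbf{P}(t^3,t^2,t,1)$, $P(\infty)=\mathbf{P}(1,0,0,0)$; the twisted cubic is $\mathscr{C}=\{P(t):t\in\mathbb{F}_q\cup\{\infty\}\}$. The osculating plane $\pi_{osc}(t)$ is $x_0-3tx_1+3t^2x_2-t^3x_3=0$ for finite $t$ and $\pi_{osc}(\infty)$ is $x_3=0$. An imaginary chord is a line of $\mathrm{PG}(3,q)$ joining $P(t_1),P(t_2)$ with $t_1,t_2=t_1^q\in\mathbb{F}_{q^2}\setminus\mathbb{F}_q$; an imaginary axis is a line of $\mathrm{PG}(3,q)$ equal to $\pi_{osc}(t_1)\cap\pi_{osc}(t_2)$ with $t_1,t_2=t_1^q\in\mathbb{F}_{q^2}\setminus\mathbb{F}_q$. An $\mathcal{E}_{nG}$-line is a line of $\mathrm{PG}(3,q)$ with no point on $\mathscr{C}$, not contained in any $\pi_{osc}(t)$, $t\in\mathbb{F}_q\cup\{\infty\}$,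 and which is neither an imaginary chord nor an imaginary axis. *)

theory Defs
  imports Main "HOL-Library.Cardinality"
begin

type_synonym 'a pt4 = "'a \<times> 'a \<times> 'a \<times> 'a"

definition comb4 :: "'a::field \<Rightarrow> 'a pt4 \<Rightarrow> 'a \<Rightarrow> 'a pt4 \<Rightarrow> 'a pt4" where
  "comb4 a u b v = (case u of (u0,u1,u2,u3) \<Rightarrow> case v of (v0,v1,v2,v3) \<Rightarrow>
     (a*u0 + b*v0, a*u1 + b*v1, a*u2 + b*v2, a*u3 + b*v3))"

text \<open>The 2-dimensional subspace spanned by u and v; its nonzero vectors are the
  (representatives of the) points of the projective line joining P(u) and P(v).\<close>
definition span2 :: "'a::field pt4 \<Rightarrow> 'a pt4 \<Rightarrow> 'a pt4 set" where
  "span2 u v = {comb4 a u b v | a b. True}"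

definition map4 :: "('a \<Rightarrow> 'b) \<Rightarrow> 'a pt4 \<Rightarrow> 'b pt4" where
  "map4 f x = (case x of (x0,x1,x2,x3) \<Rightarrow> (f x0, f x1, f x2, f x3))"

definition cubP :: "'a::field \<Rightarrow> 'a pt4" where
  "cubP t = (t^3, t^2, t, 1)"

definition cubP_inf :: "'a::field pt4" where
  "cubP_inf = (1, 0, 0, 0)"

definition osc :: "'a::field \<Rightarrow> 'a pt4 set" where
  "osc t = {(x0,x1,x2,x3). x0 - 3*t*x1 + 3*t^2*x2 - t^3*x3 = 0}"

definition osc_inf :: "'a::field pt4 set" where
  "osc_inf = {(x0,x1,x2,x3). x3 = 0}"

text \<open>E_nG-line property for the line of PG(3,q) spanned by the independent vectors
  u, v over F_q = 'a, where emb : F_q \<rightarrow> F_{q^2} = 'b is the field embedding.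
  A point of F_{q^2}\F_q is an element outside the image of emb; its conjugate is t^q.\<close>
definition EnG_line :: "('a::{field,finite} \<Rightarrow> 'b::field) \<Rightarrow> 'a pt4 \<Rightarrow> 'a pt4 \<Rightarrow> bool" where
  "EnG_line emb u v \<longleftrightarrow>
     (\<forall>t. cubP t \<notin> span2 u v) \<and> cubP_inf \<notin> span2 u v \<and>
     (\<forall>t. \<not> span2 u v \<subseteq> osc t) \<and> \<not> span2 u v \<subseteq> osc_inf \<and>
     \<not> (\<exists>t. t \<notin> range emb \<and>
          span2 (map4 emb u) (map4 emb v) = span2 (cubP t) (cubP (t ^ CARD('a)))) \<and>
     \<not> (\<exists>t. t \<notin> range emb \<and>
          span2 (map4 emb u) (map4 emb v) = osc t \<inter> osc (t ^ CARD('a)))"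

end

theory Submission
  imports Defs "HOL-Algebra.Sylow" "HOL-Algebra.Multiplicative_Group"
begin

text \<open>Write \<open>\<ell>\<^sub>m\<close> for the line through \<open>P(0,m,0,1)\<close> and \<open>P(1,0,1,0)\<close>; its vectors are
  \<open>(b, a m, b, a)\<close>. It contains \<open>P(t)\<close> only if \<open>t\<^sup>3 = t\<close> and \<open>t\<^sup>2 = m\<close>, forcing \<open>m \<in> {0,1}\<close> for
  points of \<open>\<bbbF>\<^sub>q\<close> and \<open>t \<in> \<bbbF>\<^sub>q\<close> for imaginary chords. It lies in \<open>\<pi>\<^sub>o\<^sub>s\<^sub>c(t)\<close> only if
  \<open>1 + 3t\<^sup>2 = 0\<close> and \<open>3tm + t\<^sup>3 = 0\<close>: in characteristic 2 this gives \<open>t = m = 1\<close>, in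
  characteristic 3 it is impossible, and otherwise it gives \<open>9m = 1\<close>. As the embedding of
  \<open>\<bbbF>\<^sub>q\<close> into \<open>\<bbbF>\<^bsub>q\<^sup>2\<^esub>\<close> is an injective ring map, the same computation over \<open>\<bbbF>\<^bsub>q\<^sup>2\<^esub>\<close> with \<open>m = \<mu>\<close>
  excludes imaginary axes. The
  characteristic is read off from \<open>q\<close> by Cauchy's theorem in \<open>(\<bbbF>\<^sub>q, +)\<close>.\<close>

lemma of_nat_prime_eq_0_if_dvd_card:
  assumes p: "prime p" and dvd: "p dvd CARD('a::{field,finite})"
  shows "(of_nat p :: 'a) = 0"
proof -
  define G where "G = \<lparr>carrier = (UNIV :: 'a set), monoid.mult = (+), one = (0::'a)\<rparr>"
  interpret group G
    by (rule groupI) (auto simp: G_def add.assoc intro: exI[of _ "- _"])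
  obtain H where H: "subgroup H G" "card H = p"
    using sylow_thm[of p G 1 "CARD('a) div p"] p dvd is_group by (auto simp: order_def G_def)
  then have "card H \<ge> 2" using p prime_ge_2_nat by simp
  then have "\<not> H \<subseteq> {0}"
    by (auto dest!: subset_singletonD)
  then obtain x where x: "x \<in> H" "x \<noteq> 0" by blast
  have pow: "x [^]\<^bsub>G\<lparr>carrier := H\<rparr>\<^esub> n = of_nat n * x" for n
    by (induction n) (simp_all add: G_def algebra_simps)
  have "x [^]\<^bsub>G\<lparr>carrier := H\<rparr>\<^esub> order (G\<lparr>carrier := H\<rparr>) = \<one>\<^bsub>G\<lparr>carrier := H\<rparr>\<^esub>"
    using group.pow_order_eq_1[OF subgroup_imp_group[OF H(1)]] x by simp
  then have "of_nat p * x = 0" unfolding pow by (simp add: order_def H(2) G_def)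
  with x show ?thesis by simp
qed

locale field_hom =
  fixes f :: "'a::field \<Rightarrow> 'b::field"
  assumes hom_add: "f (x + y) = f x + f y"
    and hom_mult: "f (x * y) = f x * f y"
    and hom_one: "f 1 = 1"
begin

lemma hom_zero: "f 0 = 0"
  using hom_add[of 0 0] by (metis add.right_neutral add_left_cancel)

lemma hom_uminus: "f (- x) = - f x"
  using hom_add[of x "- x"] hom_zero by (metis add.right_inverse minus_unique)

lemma hom_of_nat: "f (of_nat n) = of_nat n"
  by (induction n) (simp_all add: hom_zero hom_add hom_one)

lemma hom_numeral: "f (numeral k) = numeral k"
  using hom_of_nat[of "numeral k"] by simp

lemma hom_eq_iff: "f x = f y \<longleftrightarrow> x = y"
proof
  assume "f x = f y"
  then have "f (x - y) = 0"
    using hom_add[of x "- y"] hom_uminus by simp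
  then have "f ((x - y) * inverse (x - y)) = 0"
    by (simp add: hom_mult)
  then show "x = y"
    using hom_one by (cases "x = y") simp_all
qed simp

end

lemma mem_span2_left: "u \<in> span2 u v"
  unfolding span2_def by (rule CollectI, rule exI[of _ 1], rule exI[of _ 0])
    (simp add: comb4_def split: prod.split)

lemma mem_span2_right: "v \<in> span2 u v"
  unfolding span2_def by (rule CollectI, rule exI[of _ 0], rule exI[of _ 1])
    (simp add: comb4_def split: prod.split)

lemma mem_span2_iff:
  "w \<in> span2 (u0, u1, u2, u3) (v0, v1, v2, v3) \<longleftrightarrow>
     (\<exists>a b. w = (a*u0 + b*v0, a*u1 + b*v1, a*u2 + b*v2, a*u3 + b*v3))"
  by (simp add: span2_def comb4_def)

lemma cube_eq_self_iff:
  fixes t :: "'a::idom"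
  shows "t ^ 3 = t \<longleftrightarrow> t = 0 \<or> t = 1 \<or> t = -1"
proof -
  have "t ^ 3 - t = t * (t - 1) * (t + 1)"
    by (simp add: algebra_simps power3_eq_cube)
  then show ?thesis
    by (auto simp: eq_neg_iff_add_eq_0)
qed

abbreviation ell :: "'a::field \<Rightarrow> 'a pt4 set" where
  "ell m \<equiv> span2 (0, m, 0, 1) (1, 0, 1, 0)"

lemma cubP_in_ell_iff: "cubP t \<in> ell m \<longleftrightarrow> t ^ 3 = t \<and> t ^ 2 = m"
  by (auto simp: mem_span2_iff cubP_def)

lemma cubP_inf_notin_ell: "cubP_inf \<notin> ell m"
  by (auto simp: mem_span2_iff cubP_inf_def)

lemma ell_not_subset_osc_inf: "\<not> ell m \<subseteq> osc_inf"
  using mem_span2_left[of "(0, m, 0, 1)" "(1, 0, 1, 0)"] by (auto simp: osc_inf_def)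

lemma ell_subset_osc_imp:
  fixes m t :: "'a::field"
  assumes sub: "ell m \<subseteq> osc t" and m: "m \<noteq> 1"
  shows "(2::'a) \<noteq> 0 \<and> 9 * m = 1"
proof -
  have "(0, m, 0, 1) \<in> osc t" "(1, 0, 1, 0) \<in> osc t"
    using sub mem_span2_left mem_span2_right by blast+
  then have h1: "1 + 3 * t^2 = 0" and h2: "t * (3 * m + t^2) = 0"
    by (auto simp: osc_def algebra_simps power2_eq_square power3_eq_cube)
  have "t \<noteq> 0" using h1 by auto
  with h2 have m_eq: "3 * m = - (t^2)" by (simp add: eq_neg_iff_add_eq_0)
  show ?thesis
  proof (cases "(2::'a) = 0")
    case True
    \<comment> \<open>in characteristic 2, \<open>1 + 3t\<^sup>2 = (t + 1)\<^sup>2\<close> and \<open>-1 = 1\<close>\<close>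
    have minus_one: "- 1 = (1::'a)" using True by (simp add: eq_neg_iff_add_eq_0)
    have "(3::'a) = 2 + 1" by simp
    then have three: "(3::'a) = 1" using True by simp
    have "(t + 1)^2 = 1 + 3 * t^2"
      using True three by (simp add: power2_eq_square algebra_simps)
    with h1 have "t = - 1" by (simp add: eq_neg_iff_add_eq_0)
    with m_eq three minus_one have "m = 1" by simp
    with m show ?thesis by simp
  next
    case False
    have "9 * m = 3 * (3 * m)" by simp
    also have "\<dots> = - (3 * t^2)" using m_eq by simp
    also have "\<dots> = 1" using h1 by (metis add.commute add_eq_0_iff minus_minus)
    finally show ?thesis using False by blast
  qed
qed

lemma nine_times_neq_one:
  fixes \<mu> :: "'a::{field,finite}"
  assumes card: "even CARD('a) \<or> 3 dvd CARD('a) \<or> (\<not> 3 dvd CARD('a) \<and> odd CARD('a) \<and> \<mu> \<noteq> 1 / 9)"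
    and two: "(2::'a) \<noteq> 0"
  shows "9 * \<mu> \<noteq> 1"
proof
  assume nine_mu: "9 * \<mu> = 1"
  then have nine: "(9::'a) \<noteq> 0" by auto
  have "3 * (3 * \<mu>) = 1" using nine_mu by simp
  then have "(3::'a) \<noteq> 0" by (metis mult_zero_left zero_neq_one)
  then have "\<not> 3 dvd CARD('a)"
    using of_nat_prime_eq_0_if_dvd_card[of 3] by auto
  moreover have "odd CARD('a)"
    using two of_nat_prime_eq_0_if_dvd_card[of 2] by auto
  moreover have "\<mu> = 1 / 9"
    using nine nine_mu by (simp add: eq_divide_eq mult.commute)
  ultimately show False using card by blast
qed

theorem lemma4p4:
  fixes emb :: "'a::{field,finite} \<Rightarrow> 'b::{field,finite}" and \<mu> :: 'a
  assumes q5: "CARD('a) \<ge> 5"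
    and ext: "CARD('b) = CARD('a) ^ 2"
    and hom_add: "\<And>x y. emb (x + y) = emb x + emb y"
    and hom_mult: "\<And>x y. emb (x * y) = emb x * emb y"
    and hom_one: "emb 1 = 1"
    and mu: "\<mu> \<noteq> 0" "\<mu> \<noteq> 1"
    and cases: "even (CARD('a)) \<or> 3 dvd CARD('a) \<or>
                (\<not> 3 dvd CARD('a) \<and> odd (CARD('a)) \<and> \<mu> \<noteq> 1 / 9)"
  shows "EnG_line emb (0, \<mu>, 0, 1) (1, 0, 1, 0)"
proof -
  interpret E: field_hom emb
    by unfold_locales (fact hom_add hom_mult hom_one)+
  have emb_mu: "emb \<mu> \<noteq> 1"
    using mu(2) E.hom_eq_iff E.hom_one by metis
  have emb_cube_root: "t \<in> range emb" if "t ^ 3 = t" for t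
    using that cube_eq_self_iff[of t] E.hom_zero E.hom_one E.hom_uminus[of 1] by (metis rangeI)
  have map_ell: "map4 emb (0, \<mu>, 0, 1) = (0, emb \<mu>, 0, 1)" "map4 emb (1, 0, 1, 0) = (1, 0, 1, 0)"
    by (simp_all add: map4_def E.hom_zero E.hom_one)
  show ?thesis
    unfolding EnG_line_def map_ell
  proof (intro conjI allI notI)
    fix t assume "cubP t \<in> ell \<mu>"
    then show False using mu by (auto simp: cubP_in_ell_iff cube_eq_self_iff)
  next
    fix t assume "ell \<mu> \<subseteq> osc t"
    then show False using ell_subset_osc_imp mu(2) nine_times_neq_one[OF cases] by blast
  next
    assume "\<exists>t. t \<notin> range emb \<and> ell (emb \<mu>) = span2 (cubP t) (cubP (t ^ CARD('a)))"
    then obtain t where "t \<notin> range emb" "cubP t \<in> ell (emb \<mu>)"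
      using mem_span2_left by metis
    then show False using emb_cube_root by (simp add: cubP_in_ell_iff)
  next
    assume "\<exists>t. t \<notin> range emb \<and> ell (emb \<mu>) = osc t \<inter> osc (t ^ CARD('a))"
    then obtain t where "ell (emb \<mu>) \<subseteq> osc t" by blast
    then have "(2::'b) \<noteq> 0" "emb (9 * \<mu>) = emb 1"
      using ell_subset_osc_imp[OF _ emb_mu] by (simp_all add: E.hom_mult E.hom_numeral E.hom_one)
    then show False
      using nine_times_neq_one[OF cases] E.hom_eq_iff E.hom_numeral E.hom_zero by metis
  qed (simp_all add: cubP_inf_notin_ell ell_not_subset_osc_inf)
qed

end
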